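(* Let $G_1,G_2$ be induced subgraphs of a graph $G$ with $V(G)=V(G_1)\cup V(G_2)$ and $E(G)=E(G_1)\cup E(G_2)$, let $S$ be the subgraph induced by $V(G_1)\cap V(G_2)$, suppose $G-V(S)$ is disconnected and $S$ contains a nonedge $e$. If $G_1$ is an atom and either $G_2$ or $G_2\cup e$ is an atom, then $G$ is an atom.
   Context: A clique is a set of pairwise adjacent vertices (possibly empty). A clique separator of a graph $H$ is a clique $U$ such that $H-U$ (the subgraph induced by $V(H)\setminus U$) has at least two connected components. A graph is an atom if it is nonempty and has no clique separator. $G_2\cup e$ denotes $G_2$ with $e$ added as an edge. *)

theory Defs
  imports Main
begin

definition graph :: "'a set \<Rightarrow> ('a \<Rightarrow> 'a \<Rightarrow> bool) \<Rightarrow> bool" where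
  "graph V E \<longleftrightarrow> finite V \<and> (\<forall>x y. E x y \<longrightarrow> x \<in> V \<and> y \<in> V \<and> x \<noteq> y \<and> E y x)"

definition induced :: "('a \<Rightarrow> 'a \<Rightarrow> bool) \<Rightarrow> 'a set \<Rightarrow> 'a \<Rightarrow> 'a \<Rightarrow> bool" where
  "induced E W = (\<lambda>x y. x \<in> W \<and> y \<in> W \<and> E x y)"

definition add_edge :: "('a \<Rightarrow> 'a \<Rightarrow> bool) \<Rightarrow> 'a \<Rightarrow> 'a \<Rightarrow> 'a \<Rightarrow> 'a \<Rightarrow> bool" where
  "add_edge E u v = (\<lambda>x y. E x y \<or> (x = u \<and> y = v) \<or> (x = v \<and> y = u))"

definition disconnected :: "'a set \<Rightarrow> ('a \<Rightarrow> 'a \<Rightarrow> bool) \<Rightarrow> bool" where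
  "disconnected W E \<longleftrightarrow> (\<exists>x\<in>W. \<exists>y\<in>W. \<not> (induced E W)\<^sup>*\<^sup>* x y)"

definition clique :: "'a set \<Rightarrow> ('a \<Rightarrow> 'a \<Rightarrow> bool) \<Rightarrow> 'a set \<Rightarrow> bool" where
  "clique V E U \<longleftrightarrow> U \<subseteq> V \<and> (\<forall>x\<in>U. \<forall>y\<in>U. x \<noteq> y \<longrightarrow> E x y)"

definition clique_separator :: "'a set \<Rightarrow> ('a \<Rightarrow> 'a \<Rightarrow> bool) \<Rightarrow> 'a set \<Rightarrow> bool" where
  "clique_separator V E U \<longleftrightarrow> clique V E U \<and> disconnected (V - U) E"

definition atom :: "'a set \<Rightarrow> ('a \<Rightarrow> 'a \<Rightarrow> bool) \<Rightarrow> bool" where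
  "atom V E \<longleftrightarrow> V \<noteq> {} \<and> \<not> (\<exists>U. clique_separator V E U)"

end

theory Submission
  imports Defs
begin

text \<open>Let \<open>U\<close> be a clique separator of \<open>G\<close>. Since \<open>uv\<close> is a nonedge, one of \<open>u, v\<close>, say \<open>w\<close>,
lies outside \<open>U\<close>. The traces of \<open>U\<close> on \<open>G\<^sub>1\<close> and \<open>G\<^sub>2\<close> are cliques there (also in \<open>G\<^sub>2 \<union> uv\<close>),
so the atoms \<open>G\<^sub>1\<close> and \<open>G\<^sub>2\<close> (or \<open>G\<^sub>2 \<union> uv\<close>) stay connected after deleting \<open>U\<close>. The only edge
of \<open>G\<^sub>2 \<union> uv\<close> missing in \<open>G\<close> joins two vertices of \<open>G\<^sub>1 - U\<close>, hence is bridged inside \<open>G\<^sub>1 - U\<close>.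
Both pieces contain \<open>w\<close>, so \<open>G - U\<close> is connected, a contradiction.\<close>

lemma rtranclp_lift:
  assumes "\<And>a b. P a b \<Longrightarrow> Q\<^sup>*\<^sup>* a b" and "P\<^sup>*\<^sup>* x y"
  shows "Q\<^sup>*\<^sup>* x y"
  using assms(2) by induction (auto intro: rtranclp_trans assms(1))

lemma clique_induced: "clique V E U \<Longrightarrow> clique W (induced E W) (W \<inter> U)"
  by (auto simp: clique_def induced_def)

lemma clique_add_edge: "clique W F U \<Longrightarrow> clique W (add_edge F u v) U"
  by (auto simp: clique_def add_edge_def)

lemma atom_connected_minus_clique:
  assumes "atom W F" "clique W F U" "x \<in> W - U" "y \<in> W - U"
  shows "(induced F (W - U))\<^sup>*\<^sup>* x y"
  using assms unfolding atom_def clique_separator_def disconnected_def by blast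

lemma atom_connects_minus_clique:
  assumes "atom W F" "clique W F (W \<inter> U)"
    and edges: "\<And>a b. a \<in> W - U \<Longrightarrow> b \<in> W - U \<Longrightarrow> F a b \<Longrightarrow> R\<^sup>*\<^sup>* a b"
    and "x \<in> W - U" "y \<in> W - U"
  shows "R\<^sup>*\<^sup>* x y"
proof -
  have "W - W \<inter> U = W - U" by blast
  then have "(induced F (W - U))\<^sup>*\<^sup>* x y"
    using atom_connected_minus_clique[OF assms(1,2)] assms(4,5) by simp
  then show ?thesis
    by (rule rtranclp_lift[rotated]) (auto simp: induced_def intro: edges)
qed

lemma rtranclp_connected_Un:
  assumes "\<forall>x\<in>A. \<forall>y\<in>A. R\<^sup>*\<^sup>* x y" "\<forall>x\<in>B. \<forall>y\<in>B. R\<^sup>*\<^sup>* x y" "w \<in> A \<inter> B"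
  shows "\<forall>x\<in>A \<union> B. \<forall>y\<in>A \<union> B. R\<^sup>*\<^sup>* x y"
proof (intro ballI)
  fix x y assume "x \<in> A \<union> B" "y \<in> A \<union> B"
  then have "R\<^sup>*\<^sup>* x w" and "R\<^sup>*\<^sup>* w y"
    using assms by blast+
  then show "R\<^sup>*\<^sup>* x y" by (rule rtranclp_trans)
qed

theorem mainTheorem17:
  fixes V V1 V2 :: "'a set" and E :: "'a \<Rightarrow> 'a \<Rightarrow> bool" and u v :: 'a
  assumes "graph V E"
    and "V1 \<subseteq> V" and "V2 \<subseteq> V"
    and "V = V1 \<union> V2"
    and "\<forall>x y. E x y \<longrightarrow> (induced E V1 x y \<or> induced E V2 x y)"
    and "disconnected (V - (V1 \<inter> V2)) E"
    and "u \<in> V1 \<inter> V2" and "v \<in> V1 \<inter> V2" and "u \<noteq> v" and "\<not> E u v"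
    and "atom V1 (induced E V1)"
    and "atom V2 (induced E V2) \<or> atom V2 (add_edge (induced E V2) u v)"
  shows "atom V E"
proof -
  have "False" if "clique_separator V E U" for U
  proof -
    let ?R = "induced E (V - U)"
    have cl: "clique V E U" and dis: "disconnected (V - U) E"
      using that by (auto simp: clique_separator_def)
    obtain w where w: "w \<in> {u, v}" "w \<notin> U"
      using cl assms(9,10) by (auto simp: clique_def)
    have edge: "?R\<^sup>*\<^sup>* a b" if "a \<in> W - U" "b \<in> W - U" "induced E W a b" "W \<subseteq> V" for a b W
      using that by (auto simp: induced_def)
    have conn1: "\<forall>x\<in>V1 - U. \<forall>y\<in>V1 - U. ?R\<^sup>*\<^sup>* x y"
      using atom_connects_minus_clique[OF assms(11) clique_induced[OF cl]] edge assms(2) by blast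
    have conn2: "\<forall>x\<in>V2 - U. \<forall>y\<in>V2 - U. ?R\<^sup>*\<^sup>* x y"
      using assms(12)
    proof
      assume "atom V2 (induced E V2)"
      then show ?thesis
        using atom_connects_minus_clique[OF _ clique_induced[OF cl]] edge assms(3) by blast
    next
      assume "atom V2 (add_edge (induced E V2) u v)"
      moreover have "?R\<^sup>*\<^sup>* a b"
        if "a \<in> V2 - U" "b \<in> V2 - U" "add_edge (induced E V2) u v a b" for a b
        using that edge[of a V2 b] conn1 assms(3,7,8) by (auto simp: add_edge_def)
      ultimately show ?thesis
        using atom_connects_minus_clique[OF _ clique_add_edge[OF clique_induced[OF cl]]]
        by blast
    qed
    have "\<forall>x\<in>V - U. \<forall>y\<in>V - U. ?R\<^sup>*\<^sup>* x y"
      using rtranclp_connected_Un[OF conn1 conn2, of w] w assms(4,7,8) by (auto simp: Un_Diff)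
    then show False
      using dis by (auto simp: disconnected_def)
  qed
  moreover have "V \<noteq> {}" using assms(4,7) by auto
  ultimately show ?thesis unfolding atom_def by blast
qed

end
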